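(* Let $k\ge 100$ be an integer and let $\alpha_1,\ldots,\alpha_k$ be the roots of $f_k(X)=X^k-X^{k-1}-\cdots-X-1$. Then $$|\alpha_i-\alpha_j|>\frac{1}{k^{3/2}\,3^{k/2}}\qquad\text{for all }1\le i<j\le k.$$
   Context: $f_k(X)=X^k-X^{k-1}-\cdots-X-1$; its roots are distinct. *)

theory Defs
  imports "HOL-Analysis.Analysis" "HOL-Computational_Algebra.Polynomial"
begin

definition fk :: "nat \<Rightarrow> complex poly" where
  "fk k = monom 1 k - (\<Sum>i<k. monom 1 i)"

end

theory Submission
  imports Defs
begin

text \<open>
  A root \<open>z\<close> of \<open>f\<^sub>k\<close> satisfies \<open>z^k (2 - z) = 1\<close> (multiply \<open>f\<^sub>k\<close> by \<open>z - 1\<close>).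
  For distinct roots \<open>a, b\<close> with ratio \<open>r = a/b\<close>, dividing the two equations gives
  \<open>1 + r + \<dots> + r^(k-1) = b / (2 - a)\<close>. If \<open>|a - b|\<close> were below \<open>1/(31 k^2)\<close>, then \<open>r\<close>
  would be so close to 1 that this sum is within \<open>O(k^2 |a - b|)\<close> of \<open>k\<close>, making
  \<open>k (2 - a) - b\<close>, and hence \<open>(k+1) a - 2k\<close>, small. But \<open>(k+1) z - 2k\<close> is the non-trivial
  factor of the derivative of \<open>z^k (2 - z)\<close> and has modulus at least 1 at every root.
  Finally \<open>k^(3/2) 3^(k/2) \<ge> 32 k^2\<close> for \<open>k \<ge> 10\<close>.
\<close>

lemma fk_root_equation:
  assumes "poly (fk k) z = 0"
  shows "z ^ k * (2 - z) = 1"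
proof -
  have "z ^ k = (\<Sum>i<k. z ^ i)"
    using assms by (simp add: fk_def poly_sum poly_monom)
  moreover have "1 - z ^ k = (1 - z) * (\<Sum>i<k. z ^ i)"
    by (rule one_diff_power_eq)
  ultimately show ?thesis
    by (simp add: algebra_simps)
qed

lemma norm_root_equation:
  assumes "z ^ k * (2 - z) = (1::complex)"
  shows "cmod z ^ k * cmod (2 - z) = 1"
  using arg_cong[OF assms, of cmod] by (simp add: norm_mult norm_power)

lemma root_equation_norm_le_3:
  assumes "z ^ k * (2 - z) = (1::complex)" and "k \<ge> 1"
  shows "cmod z \<le> 3"
proof (rule ccontr)
  assume "\<not> cmod z \<le> 3"
  then have "cmod z > 3" by simp
  then have "cmod (2 - z) > 1" and "cmod z ^ k \<ge> 1"
    using norm_triangle_ineq2[of z 2] by (auto simp: norm_minus_commute one_le_power)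
  moreover have "1 * cmod (2 - z) \<le> cmod z ^ k * cmod (2 - z)"
    using \<open>cmod z ^ k \<ge> 1\<close> by (intro mult_right_mono) auto
  ultimately have "cmod z ^ k * cmod (2 - z) > 1"
    by linarith
  then show False
    using norm_root_equation[OF assms(1)] by simp
qed

lemma root_equation_norm_ge_half:
  assumes "z ^ k * (2 - z) = (1::complex)" and "k \<ge> 2"
  shows "cmod z \<ge> 1/2"
proof (rule ccontr)
  assume "\<not> cmod z \<ge> 1/2"
  then have z: "cmod z < 1/2" by simp
  have "cmod z ^ k \<le> (1/2) ^ k"
    using z by (simp add: power_mono)
  also have "\<dots> \<le> (1/2) ^ 2"
    using assms(2) by (simp add: power_decreasing)
  finally have "cmod z ^ k \<le> (1/2) ^ 2" .
  moreover have "cmod (2 - z) \<le> 5/2"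
    using norm_triangle_ineq4[of 2 z] z by simp
  ultimately have "cmod z ^ k * cmod (2 - z) \<le> (1/2) ^ 2 * (5/2)"
    by (intro mult_mono) auto
  then show False
    using norm_root_equation[OF assms(1)] by (simp add: power2_eq_square)
qed

lemma three_halves_power_ge: "k \<ge> 10 \<Longrightarrow> 2 * real k + 2 \<le> (3/2) ^ k"
proof (induction k rule: dec_induct)
  case base
  then show ?case by (simp add: power_divide)
next
  case (step n)
  then show ?case by simp
qed

lemma three_power_ge: "k \<ge> 10 \<Longrightarrow> 1024 * real k \<le> 3 ^ k"
proof (induction k rule: dec_induct)
  case base
  then show ?case by simp
next
  case (step n)
  then show ?case by simp
qed

text \<open>Either \<open>|z| < 3/2\<close> and the claim is trivial, or \<open>|2 - z| = |z|^-k\<close> is tiny, so \<open>z\<close> is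
  close to 2 and \<open>(k+1) z - 2k\<close> close to 2.\<close>
lemma root_equation_derivative_factor_ge_1:
  assumes "z ^ k * (2 - z) = (1::complex)" and "k \<ge> 10"
  shows "cmod (of_nat (k + 1) * z - of_nat (2 * k)) \<ge> 1"
proof (cases "cmod z < 3/2")
  case True
  have "cmod (of_nat (k + 1) * z) = real (k + 1) * cmod z"
    by (simp only: norm_mult norm_of_nat)
  also have "\<dots> \<le> real (k + 1) * (3/2)"
    using True by (intro mult_left_mono) auto
  moreover have "cmod (of_nat (2 * k) :: complex) = real (2 * k)"
    by (rule norm_of_nat)
  moreover have "real (2 * k) - real (k + 1) * (3/2) \<ge> 1"
    using assms(2) by (simp add: field_simps)
  ultimately have "cmod (of_nat (2 * k) - of_nat (k + 1) * z) \<ge> 1"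
    using norm_triangle_ineq2[of "of_nat (2 * k)" "of_nat (k + 1) * z"] by linarith
  then show ?thesis
    by (simp add: norm_minus_commute)
next
  case False
  then have "2 * real k + 2 \<le> cmod z ^ k"
    using three_halves_power_ge[OF assms(2)] power_mono[of "3/2" "cmod z" k] by simp
  then have "(2 * real k + 2) * cmod (2 - z) \<le> 1"
    using norm_root_equation[OF assms(1)] by (metis mult_right_mono norm_ge_zero)
  moreover have "cmod (of_nat (k + 1) * (2 - z)) = real (k + 1) * cmod (2 - z)"
    by (simp only: norm_mult norm_of_nat)
  ultimately have small: "cmod (of_nat (k + 1) * (2 - z)) \<le> 1/2"
    by (simp add: algebra_simps)
  have "of_nat (k + 1) * z - of_nat (2 * k) = 2 - of_nat (k + 1) * (2 - z)"
    by (simp add: algebra_simps)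
  then show ?thesis
    using norm_triangle_ineq2[of 2 "of_nat (k + 1) * (2 - z)"] small by simp
qed

lemma norm_power_le_3_if_near_1:
  fixes r :: "'a::real_normed_div_algebra"
  assumes "real n * norm (r - 1) \<le> 1" and "j \<le> n"
  shows "norm (r ^ j) \<le> 3"
proof -
  have "norm (r ^ j) \<le> (1 + norm (r - 1)) ^ j"
    using norm_triangle_ineq[of 1 "r - 1"] by (simp add: norm_power power_mono)
  also have "\<dots> \<le> exp (norm (r - 1)) ^ j"
    by (intro power_mono) auto
  also have "\<dots> = exp (real j * norm (r - 1))"
    by (simp add: exp_of_nat_mult)
  also have "\<dots> \<le> exp 1"
    using assms mult_right_mono[of "real j" "real n" "norm (r - 1)"] by simp
  also have "\<dots> \<le> 3"
    by (rule exp_le)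
  finally show ?thesis .
qed

lemma geometric_sum_near_1:
  fixes r :: "'a::real_normed_field"
  assumes "real n * norm (r - 1) \<le> 1"
  shows "norm (of_nat n - (\<Sum>i<n. r ^ i)) \<le> 3 * real n ^ 2 * norm (r - 1)"
proof -
  have term_bound: "norm (1 - r ^ i) \<le> 3 * real n * norm (r - 1)" if "i < n" for i
  proof -
    have "norm (\<Sum>j<i. r ^ j) \<le> (\<Sum>j<i. (3::real))"
      using norm_power_le_3_if_near_1[OF assms] that
      by (intro order.trans[OF norm_sum] sum_mono) simp
    also have "\<dots> \<le> 3 * real n"
      using that by simp
    finally have "norm (r - 1) * norm (\<Sum>j<i. r ^ j) \<le> norm (r - 1) * (3 * real n)"
      by (simp add: mult_left_mono)
    moreover have "1 - r ^ i = - ((r - 1) * (\<Sum>j<i. r ^ j))"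
      using power_diff_1_eq[of r i] by (metis minus_diff_eq)
    ultimately show ?thesis
      by (simp add: norm_mult mult_ac)
  qed
  have "norm (of_nat n - (\<Sum>i<n. r ^ i)) = norm (\<Sum>i<n. 1 - r ^ i)"
    by (simp add: sum_subtractf)
  also have "\<dots> \<le> (\<Sum>i<n. 3 * real n * norm (r - 1))"
    using term_bound by (intro order.trans[OF norm_sum] sum_mono) simp
  also have "\<dots> = 3 * real n ^ 2 * norm (r - 1)"
    by (simp add: power2_eq_square)
  finally show ?thesis .
qed

lemma root_equation_geometric_sum:
  assumes "a ^ k * (2 - a) = (1::complex)" and "b ^ k * (2 - b) = 1" and "a \<noteq> b"
  shows "(\<Sum>i<k. (a / b) ^ i) = b / (2 - a)"
proof -
  have nz: "b \<noteq> 0" "2 - a \<noteq> 0" "2 - b \<noteq> 0"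
    using assms(1,2) by (auto simp: power_0_left split: if_splits)
  have "a ^ k = 1 / (2 - a)" and "b ^ k = 1 / (2 - b)"
    using assms(1,2) nz(2,3) by (simp_all add: eq_divide_eq)
  then have ratio_power: "(a / b) ^ k = (2 - b) / (2 - a)"
    by (simp add: power_divide)
  have "(a / b - 1) * (\<Sum>i<k. (a / b) ^ i) = (a / b) ^ k - 1"
    by (rule power_diff_1_eq[symmetric])
  also have "\<dots> = (2 - b) / (2 - a) - 1"
    by (simp only: ratio_power)
  also have "\<dots> = (a / b - 1) * (b / (2 - a))"
    using nz by (simp add: field_simps)
  moreover have "a / b - 1 \<noteq> 0"
    using assms(3) nz(1) by simp
  ultimately show ?thesis
    by (metis mult_left_cancel)
qed

lemma root_equation_separation:
  assumes "a ^ k * (2 - a) = (1::complex)" and "b ^ k * (2 - b) = 1" and "a \<noteq> b"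
    and "k \<ge> 10"
  shows "cmod (a - b) \<ge> 1 / (31 * real k ^ 2)"
proof -
  define d where "d = cmod (a - b)"
  define u where "u = a / b - 1"
  have k: "real k \<ge> 10" using assms(4) by simp
  have b: "cmod b \<ge> 1/2"
    using root_equation_norm_ge_half[OF assms(2)] assms(4) by simp
  have "b \<noteq> 0"
    using b by auto
  then have "a - b = u * b"
    by (simp add: u_def field_simps)
  then have "d = cmod u * cmod b"
    by (simp add: d_def norm_mult)
  then have u: "cmod u \<le> 2 * d"
    using b mult_left_mono[of "1/2" "cmod b" "cmod u"] by simp
  show ?thesis
  proof (cases "real k * cmod u \<le> 1")
    case False
    moreover have "real k * cmod u \<le> real k * (2 * d)"
      using u by (intro mult_left_mono) auto
    ultimately have "1 \<le> 2 * real k * d"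
      by simp
    also have "\<dots> \<le> 31 * real k ^ 2 * d"
      using k by (intro mult_right_mono) (auto simp: d_def power2_eq_square)
    finally have "1 \<le> d * (31 * real k ^ 2)"
      by (simp add: mult_ac)
    then show ?thesis
      unfolding d_def[symmetric] using k by (subst pos_divide_le_eq) simp_all
  next
    case True
    let ?S = "\<Sum>i<k. (a / b) ^ i"
    let ?w = "of_nat (k + 1) * a - of_nat (2 * k) :: complex"
    have "2 - a \<noteq> 0"
      using assms(1) by auto
    then have "(2 - a) * (of_nat k - ?S) = of_nat k * (2 - a) - b"
      unfolding root_equation_geometric_sum[OF assms(1-3)] by (simp add: field_simps)
    also have "\<dots> = (a - b) - ?w"
      by (simp add: algebra_simps)
    finally have w: "?w = (a - b) - (2 - a) * (of_nat k - ?S)"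
      by simp
    have "cmod (of_nat k - ?S) \<le> 3 * real k ^ 2 * cmod u"
      using geometric_sum_near_1[OF True[unfolded u_def]] by (simp add: u_def)
    also have "\<dots> \<le> 3 * real k ^ 2 * (2 * d)"
      using u by (intro mult_left_mono) auto
    finally have "cmod (of_nat k - ?S) \<le> 3 * real k ^ 2 * (2 * d)" .
    moreover have "cmod (2 - a) \<le> 5"
      using norm_triangle_ineq4[of 2 a] root_equation_norm_le_3[OF assms(1)] assms(4) by simp
    ultimately have "cmod ((2 - a) * (of_nat k - ?S)) \<le> 5 * (3 * real k ^ 2 * (2 * d))"
      unfolding norm_mult by (intro mult_mono) auto
    moreover have "1 \<le> cmod ?w"
      using root_equation_derivative_factor_ge_1[OF assms(1,4)] .
    ultimately have "1 \<le> d + 30 * real k ^ 2 * d"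
      using norm_triangle_ineq4[of "a - b" "(2 - a) * (of_nat k - ?S)"] unfolding w d_def
      by linarith
    moreover have "d \<le> real k ^ 2 * d"
      using k one_le_power[of "real k" 2] by (simp add: d_def mult_le_cancel_right1)
    ultimately have "1 \<le> d * (31 * real k ^ 2)"
      by (simp add: algebra_simps)
    then show ?thesis
      unfolding d_def[symmetric] using k by (subst pos_divide_le_eq) simp_all
  qed
qed

lemma powr_three_halves_mult_sqrt_three_power_ge:
  assumes "k \<ge> 10"
  shows "32 * real k ^ 2 \<le> real k powr (3/2) * 3 powr (real k / 2)"
proof -
  have "real k powr (3/2) = sqrt (real k ^ 3)"
    by (simp add: powr_half_sqrt_powr powr_realpow flip: powr_powr)
  moreover have "3 powr (real k / 2) = sqrt (3 ^ k)"
    by (simp add: powr_half_sqrt_powr powr_realpow)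
  ultimately have "real k powr (3/2) * 3 powr (real k / 2) = sqrt (real k ^ 3 * 3 ^ k)"
    by (simp add: real_sqrt_mult)
  also have "\<dots> \<ge> sqrt (real k ^ 3 * (1024 * real k))"
    using three_power_ge[OF assms] by (intro real_sqrt_le_mono mult_left_mono) auto
  also have "sqrt (real k ^ 3 * (1024 * real k)) = 32 * real k ^ 2"
    by (rule real_sqrt_unique) (simp_all add: power_mult_distrib eval_nat_numeral)
  finally show ?thesis .
qed

theorem mainTheorem3:
  fixes k :: nat and a b :: complex
  assumes "k \<ge> 100"
    and "poly (fk k) a = 0" and "poly (fk k) b = 0" and "a \<noteq> b"
  shows "cmod (a - b) > 1 / (real k powr (3/2) * 3 powr (real k / 2))"
proof -
  have k: "k \<ge> 10" and "real k > 0" using assms(1) by simp_all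
  then have "1 / (real k powr (3/2) * 3 powr (real k / 2)) \<le> 1 / (32 * real k ^ 2)"
    using powr_three_halves_mult_sqrt_three_power_ge[OF k] by (intro divide_left_mono) auto
  also have "\<dots> < 1 / (31 * real k ^ 2)"
    using \<open>real k > 0\<close> by (intro divide_strict_left_mono) auto
  also have "\<dots> \<le> cmod (a - b)"
    using fk_root_equation[OF assms(2)] fk_root_equation[OF assms(3)] assms(4) k
    by (rule root_equation_separation)
  finally show ?thesis .
qed

end
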